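(* Let $\mathsf{T}$ be a rooted plane tree and $\delta\in\mathcal{O}(\mathsf{T})$. (i) For every $v\in\mathsf{T}$ and every $u\in M_\delta(v)$, the ornamentation $\delta_u^v$ is covered by $\delta$ in $\mathcal{O}(\mathsf{T})$. (ii) For every ornamentation $\delta'$ covered by $\delta$ in $\mathcal{O}(\mathsf{T})$, there exist $v\in\mathsf{T}$ and $u\in M_\delta(v)$ such that $\delta'=\delta_u^v$. (iii) For all $v\in\mathsf{T}$, $\mathsf{Pop}(\delta)(v)=\bigcap_{u\in M_\delta(v)}\delta_u^v(v)$ (where the empty intersection is interpreted as $\delta(v)$).
   Context: A rooted plane tree $\mathsf{T}$ is a finite tree with a distinguished root, regarded as a poset $\leq_\mathsf{T}$ in which $v'\leq_\mathsf{T} v$ iff $v$ lies on the path from $v'$ to the root. An ornament is a nonempty set of nodes inducing a connected subgraph. For a set $S$ of nodes and $u\in S$, $\Delta_S(u)=\{w\in S:w\leq_\mathsf{T} u\}$. An ornamentation is a map $\delta$ from $\mathsf{T}$ to ornaments such that the unique maximal element of $\delta(v)$ is $v$ and any two sets $\delta(v),\delta(v')$ are nested or disjoint. $\mathcal{O}(\mathsf{T})$ is the set of ornamentations ordered by $\delta\leq\delta'$ iff $\delta(v)\subseteq\delta'(v)$ for all $v$; it is a lattice with meet given by pointwise intersection. $\mathsf{Pop}(\delta)=\bigwedge(\{\delta\}\cup\{\delta':\delta'\lessdot\delta\})$. For distinct nodes $u,v$, $v$ wraps $u$ in $\delta$ if $\delta(u)\subseteq\delta(v)$ and there is no node $w$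 with $\delta(u)\subsetneq\delta(w)\subsetneq\delta(v)$. When $v$ wraps $u$, the reduction of $\delta(v)$ by $u$ is $\delta(v)\setminus\Delta_{\delta(v)}(u)$, and $\delta_u^v$ is the ornamentation with $\delta_u^v(v)=\delta(v)\setminus\Delta_{\delta(v)}(u)$ and $\delta_u^v(w)=\delta(w)$ for $w\neq v$. A minimal reduction of $\delta(v)$ is a reduction of $\delta(v)$ (by some node wrapped by $v$) that is not properly contained in any other reduction of $\delta(v)$. $M_\delta(v)$ is the set of nodes $u\in\delta(v)$ wrapped by $v$ such that $\delta(v)\setminus\Delta_{\delta(v)}(u)$ is a minimal reduction of $\delta(v)$. *)

theory Defs
  imports Main
begin

text \<open>A rooted (plane) tree is given by a finite node set V, a root r and a parent map p.
  The plane structure (order of children) plays no role in the statement and is omitted.\<close>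

definition rooted_tree :: "'a set \<Rightarrow> 'a \<Rightarrow> ('a \<Rightarrow> 'a) \<Rightarrow> bool" where
  "rooted_tree V r p \<longleftrightarrow> finite V \<and> r \<in> V \<and> (\<forall>v\<in>V. v \<noteq> r \<longrightarrow> p v \<in> V)
     \<and> (\<forall>v\<in>V. \<exists>n. (p ^^ n) v = r)"

definition tle :: "'a \<Rightarrow> ('a \<Rightarrow> 'a) \<Rightarrow> 'a \<Rightarrow> 'a \<Rightarrow> bool" where
  "tle r p v' v \<longleftrightarrow> (\<exists>n. (p ^^ n) v' = v \<and> (\<forall>k<n. (p ^^ k) v' \<noteq> r))"

definition tadj :: "'a \<Rightarrow> ('a \<Rightarrow> 'a) \<Rightarrow> 'a \<Rightarrow> 'a \<Rightarrow> bool" where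
  "tadj r p x y \<longleftrightarrow> (x \<noteq> r \<and> p x = y) \<or> (y \<noteq> r \<and> p y = x)"

definition ornament :: "'a set \<Rightarrow> 'a \<Rightarrow> ('a \<Rightarrow> 'a) \<Rightarrow> 'a set \<Rightarrow> bool" where
  "ornament V r p S \<longleftrightarrow> S \<noteq> {} \<and> S \<subseteq> V \<and>
     (\<forall>x\<in>S. \<forall>y\<in>S. (x, y) \<in> {(a, b). a \<in> S \<and> b \<in> S \<and> tadj r p a b}\<^sup>*)"

text \<open>ornamentations; outside V the value is fixed to {} for a canonical representation\<close>
definition ornamentation :: "'a set \<Rightarrow> 'a \<Rightarrow> ('a \<Rightarrow> 'a) \<Rightarrow> ('a \<Rightarrow> 'a set) \<Rightarrow> bool" where
  "ornamentation V r p \<delta> \<longleftrightarrow>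
     (\<forall>v\<in>V. ornament V r p (\<delta> v) \<and> v \<in> \<delta> v \<and> (\<forall>w\<in>\<delta> v. tle r p w v \<and> (tle r p v w \<longrightarrow> w = v))) \<and>
     (\<forall>v. v \<notin> V \<longrightarrow> \<delta> v = {}) \<and>
     (\<forall>v\<in>V. \<forall>v'\<in>V. \<delta> v \<subseteq> \<delta> v' \<or> \<delta> v' \<subseteq> \<delta> v \<or> \<delta> v \<inter> \<delta> v' = {})"

definition orn_le :: "'a set \<Rightarrow> ('a \<Rightarrow> 'a set) \<Rightarrow> ('a \<Rightarrow> 'a set) \<Rightarrow> bool" where
  "orn_le V \<delta> \<delta>' \<longleftrightarrow> (\<forall>v\<in>V. \<delta> v \<subseteq> \<delta>' v)"

definition covered_by :: "'a set \<Rightarrow> 'a \<Rightarrow> ('a \<Rightarrow> 'a) \<Rightarrow> ('a \<Rightarrow> 'a set) \<Rightarrow> ('a \<Rightarrow> 'a set) \<Rightarrow> bool" where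
  "covered_by V r p \<delta>' \<delta> \<longleftrightarrow> ornamentation V r p \<delta>' \<and> ornamentation V r p \<delta> \<and>
     orn_le V \<delta>' \<delta> \<and> \<delta>' \<noteq> \<delta> \<and>
     \<not> (\<exists>\<gamma>. ornamentation V r p \<gamma> \<and> orn_le V \<delta>' \<gamma> \<and> orn_le V \<gamma> \<delta> \<and> \<gamma> \<noteq> \<delta>' \<and> \<gamma> \<noteq> \<delta>)"

text \<open>Pop: the meet of delta and all its lower covers; meets in O(T) are pointwise intersections\<close>
definition Pop :: "'a set \<Rightarrow> 'a \<Rightarrow> ('a \<Rightarrow> 'a) \<Rightarrow> ('a \<Rightarrow> 'a set) \<Rightarrow> 'a \<Rightarrow> 'a set" where
  "Pop V r p \<delta> = (\<lambda>v. \<delta> v \<inter> \<Inter>{\<delta>' v | \<delta>'. covered_by V r p \<delta>' \<delta>})"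

definition Delta :: "'a \<Rightarrow> ('a \<Rightarrow> 'a) \<Rightarrow> 'a set \<Rightarrow> 'a \<Rightarrow> 'a set" where
  "Delta r p S u = {w \<in> S. tle r p w u}"

definition wraps :: "'a set \<Rightarrow> 'a \<Rightarrow> ('a \<Rightarrow> 'a) \<Rightarrow> ('a \<Rightarrow> 'a set) \<Rightarrow> 'a \<Rightarrow> 'a \<Rightarrow> bool" where
  "wraps V r p \<delta> v u \<longleftrightarrow> u \<in> V \<and> v \<in> V \<and> u \<noteq> v \<and> \<delta> u \<subseteq> \<delta> v \<and>
     \<not> (\<exists>w\<in>V. \<delta> u \<subset> \<delta> w \<and> \<delta> w \<subset> \<delta> v)"

definition reduction :: "'a \<Rightarrow> ('a \<Rightarrow> 'a) \<Rightarrow> ('a \<Rightarrow> 'a set) \<Rightarrow> 'a \<Rightarrow> 'a \<Rightarrow> 'a set" where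
  "reduction r p \<delta> v u = \<delta> v - Delta r p (\<delta> v) u"

definition delta_red :: "'a \<Rightarrow> ('a \<Rightarrow> 'a) \<Rightarrow> ('a \<Rightarrow> 'a set) \<Rightarrow> 'a \<Rightarrow> 'a \<Rightarrow> ('a \<Rightarrow> 'a set)" where
  "delta_red r p \<delta> u v = \<delta>(v := reduction r p \<delta> v u)"

definition is_reduction :: "'a set \<Rightarrow> 'a \<Rightarrow> ('a \<Rightarrow> 'a) \<Rightarrow> ('a \<Rightarrow> 'a set) \<Rightarrow> 'a \<Rightarrow> 'a set \<Rightarrow> bool" where
  "is_reduction V r p \<delta> v S \<longleftrightarrow> (\<exists>u. wraps V r p \<delta> v u \<and> S = reduction r p \<delta> v u)"

definition minimal_reduction :: "'a set \<Rightarrow> 'a \<Rightarrow> ('a \<Rightarrow> 'a) \<Rightarrow> ('a \<Rightarrow> 'a set) \<Rightarrow> 'a \<Rightarrow> 'a set \<Rightarrow> bool" where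
  "minimal_reduction V r p \<delta> v S \<longleftrightarrow> is_reduction V r p \<delta> v S \<and>
     \<not> (\<exists>S'. is_reduction V r p \<delta> v S' \<and> S \<subset> S')"

definition M :: "'a set \<Rightarrow> 'a \<Rightarrow> ('a \<Rightarrow> 'a) \<Rightarrow> ('a \<Rightarrow> 'a set) \<Rightarrow> 'a \<Rightarrow> 'a set" where
  "M V r p \<delta> v = {u \<in> \<delta> v. wraps V r p \<delta> v u \<and> minimal_reduction V r p \<delta> v (reduction r p \<delta> v u)}"

end

theory Submission
  imports Defs
begin

text \<open>
  A reduction of \<delta>(v) by a node u wrapped by v cuts off exactly the part of \<delta>(v) below u.
  Since an ornament with top v is the same as a set closed under taking parents below v, what
  remains is again an ornament, and it is nested with every other \<delta>(w). So replacing \<delta>(v) by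
  the reduction gives an ornamentation below \<delta>, covered by \<delta> when the reduction is minimal.
  Conversely, let \<gamma> < \<delta> and choose v with \<gamma>(v) \<noteq> \<delta>(v) and \<delta>(v) minimal. Then \<gamma> agrees with
  \<delta> on all nodes wrapped by v. A point of \<delta>(v) missing from \<gamma>(v) lies in \<delta>(u) = \<gamma>(u) for
  some such u; nestedness forces \<gamma>(u) and \<gamma>(v) to be disjoint, so \<gamma>(v) misses everything
  below u and lies in the reduction by u, hence in a minimal one.
\<close>

section \<open>The tree order\<close>

text \<open>The parent of the root is unconstrained, so a climb must not step out of the root.\<close>

definition climbs :: "'a \<Rightarrow> ('a \<Rightarrow> 'a) \<Rightarrow> nat \<Rightarrow> 'a \<Rightarrow> 'a \<Rightarrow> bool" where
  "climbs r p n a b \<longleftrightarrow> (p ^^ n) a = b \<and> (\<forall>k<n. (p ^^ k) a \<noteq> r)"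

lemma tle_iff_climbs: "tle r p a b \<longleftrightarrow> (\<exists>n. climbs r p n a b)"
  unfolding tle_def climbs_def ..

lemma climbs_0 [simp]: "climbs r p 0 a b \<longleftrightarrow> a = b"
  unfolding climbs_def by simp

lemma funpow_split: "k \<le> n \<Longrightarrow> (f ^^ n) x = (f ^^ (n - k)) ((f ^^ k) x)"
  by (metis funpow_add le_add_diff_inverse2 o_apply)

lemma climbs_append:
  assumes "climbs r p n a b" "climbs r p m b c"
  shows "climbs r p (m + n) a c"
  unfolding climbs_def
proof (intro conjI allI impI)
  show "(p ^^ (m + n)) a = c"
    using assms funpow_split[of n "m + n" p a] unfolding climbs_def by simp
  fix k assume "k < m + n"
  then show "(p ^^ k) a \<noteq> r"
    using assms funpow_split[of n k p a] unfolding climbs_def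
    by (cases "k < n") auto
qed

lemma climbs_split:
  assumes "climbs r p n a b" "k \<le> n"
  shows "climbs r p k a ((p ^^ k) a)" "climbs r p (n - k) ((p ^^ k) a) b"
proof -
  have shift: "(p ^^ j) ((p ^^ k) a) = (p ^^ (j + k)) a" for j
    by (simp add: funpow_add)
  show "climbs r p k a ((p ^^ k) a)" "climbs r p (n - k) ((p ^^ k) a) b"
    using assms unfolding climbs_def shift by (auto simp: less_diff_conv)
qed

lemma climbs_cycle_avoids_root:
  assumes "climbs r p n a a" "n > 0"
  shows "(p ^^ k) a \<noteq> r"
  using assms funpow_mod_eq[of n p a k] unfolding climbs_def by (metis mod_less_divisor)

lemma tle_refl: "tle r p a a"
  unfolding tle_iff_climbs by (auto intro: exI[of _ 0])

lemma tle_trans: "tle r p a b \<Longrightarrow> tle r p b c \<Longrightarrow> tle r p a c"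
  unfolding tle_iff_climbs by (blast intro: climbs_append)

lemma tle_parent: "a \<noteq> r \<Longrightarrow> tle r p a (p a)"
  unfolding tle_def by (auto intro: exI[of _ 1])

lemma tle_strictly_below:
  assumes "tle r p a b" "a \<noteq> b"
  shows "a \<noteq> r" "tle r p (p a) b"
proof -
  obtain n where n: "climbs r p n a b" using assms(1) unfolding tle_iff_climbs by blast
  with assms(2) have "n > 0" by (cases n) auto
  then show "a \<noteq> r" using n unfolding climbs_def by auto
  show "tle r p (p a) b"
    using climbs_split(2)[OF n, of 1] \<open>n > 0\<close> unfolding tle_iff_climbs by auto
qed

lemma tle_linear_above:
  assumes "tle r p c a" "tle r p c b"
  shows "tle r p a b \<or> tle r p b a"
proof -
  obtain n m where n: "climbs r p n c a" and m: "climbs r p m c b"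
    using assms unfolding tle_iff_climbs by blast
  have "(p ^^ n) c = a" "(p ^^ m) c = b" using n m unfolding climbs_def by auto
  then show ?thesis
    using climbs_split(2)[OF n, of m] climbs_split(2)[OF m, of n] unfolding tle_iff_climbs
    by (metis nat_le_linear)
qed

lemma tle_antisym_if_reaches_root:
  assumes "(p ^^ j) a = r" "tle r p a b" "tle r p b a"
  shows "a = b"
proof (rule ccontr)
  assume "a \<noteq> b"
  obtain n m where n: "climbs r p n a b" and m: "climbs r p m b a"
    using assms(2,3) unfolding tle_iff_climbs by blast
  have "n > 0" using n \<open>a \<noteq> b\<close> by (cases n) auto
  then show False
    using climbs_cycle_avoids_root[OF climbs_append[OF n m]] assms(1) by simp
qed

section \<open>Ornaments as parent-closed sets\<close>

definition edges_in :: "'a \<Rightarrow> ('a \<Rightarrow> 'a) \<Rightarrow> 'a set \<Rightarrow> ('a \<times> 'a) set" where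
  "edges_in r p S = {(a, b). a \<in> S \<and> b \<in> S \<and> tadj r p a b}"

lemma ornament_iff_edges_in:
  "ornament V r p S \<longleftrightarrow> S \<noteq> {} \<and> S \<subseteq> V \<and> (\<forall>x\<in>S. \<forall>y\<in>S. (x, y) \<in> (edges_in r p S)\<^sup>*)"
  unfolding ornament_def edges_in_def ..

lemma sym_edges_in: "sym (edges_in r p S)"
  unfolding sym_def edges_in_def tadj_def by auto

lemma climbs_connected_in_parent_closed:
  assumes "\<forall>y\<in>S. y \<noteq> v \<longrightarrow> p y \<in> S" "a \<in> S" "climbs r p n a v"
  shows "(a, v) \<in> (edges_in r p S)\<^sup>*"
  using assms(2,3)
proof (induction n arbitrary: a)
  case 0
  then show ?case by simp
next
  case (Suc n)
  show ?case
  proof (cases "a = v")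
    case False
    have "a \<noteq> r" "climbs r p n (p a) v"
      using Suc.prems climbs_split(2)[OF Suc.prems(2), of 1] unfolding climbs_def by auto
    moreover have "p a \<in> S" using assms(1) Suc.prems(1) False by blast
    ultimately have "(a, p a) \<in> edges_in r p S" "(p a, v) \<in> (edges_in r p S)\<^sup>*"
      using Suc.prems(1) Suc.IH unfolding edges_in_def tadj_def by auto
    then show ?thesis by (rule converse_rtrancl_into_rtrancl)
  qed simp
qed

lemma reduction_eq: "reduction r p \<delta> v u = {w \<in> \<delta> v. \<not> tle r p w u}"
  unfolding reduction_def Delta_def by auto

lemma delta_red_apply: "delta_red r p \<delta> u v w = (if w = v then reduction r p \<delta> v u else \<delta> w)"
  unfolding delta_red_def by simp

lemma M_memD:
  "u \<in> M V r p \<delta> v \<Longrightarrow> wraps V r p \<delta> v u \<and> minimal_reduction V r p \<delta> v (reduction r p \<delta> v u)"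
  unfolding M_def by blast

locale rtree =
  fixes V :: "'a set" and r :: 'a and p :: "'a \<Rightarrow> 'a"
  assumes rooted_tree: "rooted_tree V r p"
begin

lemma finite_V: "finite V"
  using rooted_tree unfolding rooted_tree_def by blast

lemma tle_antisym: "a \<in> V \<Longrightarrow> tle r p a b \<Longrightarrow> tle r p b a \<Longrightarrow> a = b"
  using rooted_tree tle_antisym_if_reaches_root unfolding rooted_tree_def by metis

lemma ornament_iff_parent_closed:
  assumes "S \<subseteq> V" "v \<in> S" "\<forall>w\<in>S. tle r p w v"
  shows "ornament V r p S \<longleftrightarrow> (\<forall>y\<in>S. y \<noteq> v \<longrightarrow> p y \<in> S)"
proof
  assume orn: "ornament V r p S"
  show "\<forall>y\<in>S. y \<noteq> v \<longrightarrow> p y \<in> S"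
  proof (intro ballI impI, rule ccontr)
    fix y assume y: "y \<in> S" "y \<noteq> v" "p y \<notin> S"
    \<comment> \<open>Without its parent, y is a local top of S: everything connected to y inside S lies below y.\<close>
    have "tle r p c y" if "(y, c) \<in> (edges_in r p S)\<^sup>*" for c
      using that
    proof (induction rule: rtrancl_induct)
      case (step b c)
      then have "c \<in> S" "tadj r p b c" unfolding edges_in_def by auto
      then consider "b \<noteq> r" "p b = c" | "c \<noteq> r" "p c = b" unfolding tadj_def by blast
      then show ?case
      proof cases
        case 1
        then have "b \<noteq> y" using y(3) \<open>c \<in> S\<close> by blast
        then show ?thesis using tle_strictly_below(2)[OF step.IH] 1 by simp
      next
        case 2
        then have "tle r p c b" using tle_parent[of c r p] by simp
        then show ?thesis using step.IH by (rule tle_trans)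
      qed
    qed (rule tle_refl)
    moreover have "(y, v) \<in> (edges_in r p S)\<^sup>*"
      using orn y(1) assms(2) unfolding ornament_iff_edges_in by blast
    ultimately have "tle r p v y" .
    moreover have "y \<in> V" "tle r p y v" using y(1) assms(1,3) by auto
    ultimately show False using tle_antisym y(2) by blast
  qed
next
  assume closed: "\<forall>y\<in>S. y \<noteq> v \<longrightarrow> p y \<in> S"
  have up: "(y, v) \<in> (edges_in r p S)\<^sup>*" if y: "y \<in> S" for y
  proof -
    obtain n where "climbs r p n y v" using y assms(3) unfolding tle_iff_climbs by blast
    then show ?thesis using climbs_connected_in_parent_closed[OF closed y] by blast
  qed
  have "(x, y) \<in> (edges_in r p S)\<^sup>*" if "x \<in> S" "y \<in> S" for x y
    using up[OF that(1)] symD[OF sym_rtrancl[OF sym_edges_in] up[OF that(2)]] by (rule rtrancl_trans)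
  then show "ornament V r p S" using assms(1,2) unfolding ornament_iff_edges_in by blast
qed

lemma ornament_interval_closed:
  assumes "ornament V r p S" "v \<in> S" "\<forall>w\<in>S. tle r p w v"
    and "a \<in> S" "tle r p a b" "tle r p b v"
  shows "b \<in> S"
proof -
  have closed: "\<forall>y\<in>S. y \<noteq> v \<longrightarrow> p y \<in> S"
    using assms(1-3) ornament_iff_parent_closed[of S v] unfolding ornament_def by blast
  obtain n where "climbs r p n a b" using assms(5) unfolding tle_iff_climbs by blast
  then show ?thesis
    using assms(4)
  proof (induction n arbitrary: a)
    case (Suc n)
    show ?case
    proof (cases "a = v")
      case True
      have "tle r p v b" using Suc.prems(1) True unfolding tle_iff_climbs by blast
      then have "b = v" using tle_antisym assms(6) assms(2) assms(1) unfolding ornament_def by blast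
      then show ?thesis using assms(2) by simp
    next
      case False
      then show ?thesis
        using Suc closed climbs_split(2)[OF Suc.prems(1), of 1] by simp
    qed
  qed simp
qed

section \<open>Ornamentations and their reductions\<close>

context
  fixes \<delta> :: "'a \<Rightarrow> 'a set"
  assumes orn: "ornamentation V r p \<delta>"
begin

lemma ornamentation_top: "v \<in> V \<Longrightarrow> ornament V r p (\<delta> v) \<and> v \<in> \<delta> v"
  using orn unfolding ornamentation_def by simp

lemma ornamentation_outside: "v \<notin> V \<Longrightarrow> \<delta> v = {}"
  using orn unfolding ornamentation_def by simp

lemma ornamentation_nested: "a \<in> V \<Longrightarrow> b \<in> V \<Longrightarrow> \<delta> a \<subseteq> \<delta> b \<or> \<delta> b \<subseteq> \<delta> a \<or> \<delta> a \<inter> \<delta> b = {}"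
  using orn unfolding ornamentation_def by simp

lemma ornamentation_memD:
  assumes "w \<in> \<delta> v"
  shows "v \<in> V" "w \<in> V" "tle r p w v"
proof -
  show "v \<in> V" using assms ornamentation_outside by blast
  then have "ornament V r p (\<delta> v)" using ornamentation_top by blast
  then show "w \<in> V" using assms unfolding ornament_def by blast
  show "tle r p w v" using orn assms \<open>v \<in> V\<close> unfolding ornamentation_def by blast
qed

lemma ornamentation_inj:
  assumes "a \<in> V" "b \<in> V" "\<delta> a = \<delta> b"
  shows "a = b"
proof -
  have "a \<in> \<delta> b" "b \<in> \<delta> a" using assms ornamentation_top by auto
  then show ?thesis using ornamentation_memD(3) tle_antisym assms(1) by blast
qed

lemma ornamentation_mem_subset:
  assumes "a \<in> \<delta> b"
  shows "\<delta> a \<subseteq> \<delta> b"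
proof -
  have a: "a \<in> V" "b \<in> V" "tle r p a b" using ornamentation_memD assms by auto
  then consider "\<delta> a \<subseteq> \<delta> b" | "\<delta> b \<subseteq> \<delta> a" | "\<delta> a \<inter> \<delta> b = {}"
    using ornamentation_nested by blast
  then show ?thesis
  proof cases
    case 2
    then have "b \<in> \<delta> a" using ornamentation_top a(2) by blast
    then have "b = a" using tle_antisym a ornamentation_memD(3) by blast
    then show ?thesis by simp
  next
    case 3
    then show ?thesis using assms ornamentation_top a(1) by blast
  qed
qed

lemma ornamentation_interval:
  assumes "a \<in> \<delta> v" "tle r p a b" "tle r p b v"
  shows "b \<in> \<delta> v"
proof -
  have "v \<in> V" using assms(1) ornamentation_memD by blast
  then have "ornament V r p (\<delta> v)" "v \<in> \<delta> v" using ornamentation_top by auto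
  then show ?thesis
    using ornament_interval_closed assms ornamentation_memD(3) by blast
qed

lemma ornamentation_finite: "finite (\<delta> v)"
  using ornamentation_memD(2) finite_V by (meson finite_subset subsetI)

lemma ornamentation_eqI:
  assumes "ornamentation V r p \<gamma>" "\<forall>v\<in>V. \<gamma> v = \<delta> v"
  shows "\<gamma> = \<delta>"
proof
  fix v show "\<gamma> v = \<delta> v"
    using assms ornamentation_outside unfolding ornamentation_def by (cases "v \<in> V") auto
qed

lemma ornamentation_update:
  assumes v: "v \<in> V" and S: "ornament V r p S" "v \<in> S" "S \<subseteq> \<delta> v"
    and nested: "\<forall>w\<in>V. w \<noteq> v \<longrightarrow> \<delta> w \<subseteq> S \<or> S \<subseteq> \<delta> w \<or> \<delta> w \<inter> S = {}"
  shows "ornamentation V r p (\<delta>(v := S))"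
  unfolding ornamentation_def
proof (intro conjI ballI allI impI)
  fix w assume w: "w \<in> V"
  show "ornament V r p ((\<delta>(v := S)) w)" "w \<in> (\<delta>(v := S)) w"
    using ornamentation_top[OF w] S by auto
  fix x assume "x \<in> (\<delta>(v := S)) w"
  then have x: "x \<in> \<delta> w" using S(3) by (auto split: if_splits)
  then show "tle r p x w" by (rule ornamentation_memD)
  show "x = w" if "tle r p w x" using tle_antisym[OF w that] ornamentation_memD(3)[OF x] by simp
next
  fix w assume "w \<notin> V"
  then show "(\<delta>(v := S)) w = {}" using v ornamentation_outside by auto
next
  fix a b assume "a \<in> V" "b \<in> V"
  then show "(\<delta>(v := S)) a \<subseteq> (\<delta>(v := S)) b \<or> (\<delta>(v := S)) b \<subseteq> (\<delta>(v := S)) a \<or>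
      (\<delta>(v := S)) a \<inter> (\<delta>(v := S)) b = {}"
    using nested ornamentation_nested by (cases "a = v"; cases "b = v") auto
qed

lemma wrapsD:
  assumes "wraps V r p \<delta> v u"
  shows "u \<in> V" "v \<in> V" "u \<noteq> v" "u \<in> \<delta> v" "\<delta> u \<subset> \<delta> v"
proof -
  show "u \<in> V" "v \<in> V" "u \<noteq> v" using assms unfolding wraps_def by auto
  then show "u \<in> \<delta> v" "\<delta> u \<subset> \<delta> v"
    using assms ornamentation_top ornamentation_inj unfolding wraps_def by blast+
qed

lemma reduction_ornament:
  assumes "wraps V r p \<delta> v u"
  shows "ornament V r p (reduction r p \<delta> v u)" "v \<in> reduction r p \<delta> v u"
    "reduction r p \<delta> v u \<subseteq> \<delta> v"
proof -
  note u = wrapsD[OF assms]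
  let ?R = "reduction r p \<delta> v u"
  show sub: "?R \<subseteq> \<delta> v" unfolding reduction_eq by blast
  have "tle r p u v" using u(4) by (rule ornamentation_memD)
  then have "\<not> tle r p v u" using tle_antisym u(2,3) by blast
  then show top: "v \<in> ?R" unfolding reduction_eq using ornamentation_top[OF u(2)] by blast
  have below_v: "\<forall>w\<in>?R. tle r p w v" using sub ornamentation_memD(3) by blast
  have "p y \<in> ?R" if y: "y \<in> ?R" "y \<noteq> v" for y
  proof -
    have "tle r p y v" using y(1) below_v by blast
    note strict = tle_strictly_below[OF this y(2)]
    have up: "tle r p y (p y)" "tle r p (p y) v" using tle_parent[OF strict(1)] strict(2) by auto
    have "y \<in> \<delta> v" "\<not> tle r p y u" using y(1) unfolding reduction_eq by auto
    then have "p y \<in> \<delta> v" "\<not> tle r p (p y) u"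
      using ornamentation_interval[OF _ up] tle_trans[OF up(1)] by blast+
    then show ?thesis unfolding reduction_eq by blast
  qed
  moreover have "?R \<subseteq> V" using sub ornamentation_memD(2) by blast
  ultimately show "ornament V r p ?R" using ornament_iff_parent_closed[OF _ top below_v] by blast
qed

lemma reduction_nested:
  assumes "wraps V r p \<delta> v u" "w \<in> V" "w \<noteq> v"
  shows "\<delta> w \<subseteq> reduction r p \<delta> v u \<or> reduction r p \<delta> v u \<subseteq> \<delta> w
    \<or> \<delta> w \<inter> reduction r p \<delta> v u = {}"
proof -
  note u = wrapsD[OF assms(1)]
  let ?R = "reduction r p \<delta> v u"
  have sub: "?R \<subseteq> \<delta> v" using reduction_ornament[OF assms(1)] by blast
  consider "\<delta> w \<inter> \<delta> v = {}" | "\<delta> v \<subseteq> \<delta> w" | "\<delta> w \<subseteq> \<delta> v"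
    using ornamentation_nested[OF assms(2) u(2)] by blast
  then show ?thesis
  proof cases
    case 3
    show ?thesis
    proof (cases "tle r p w u")
      case True
      have "tle r p y u" if "y \<in> \<delta> w" for y
        using tle_trans[OF ornamentation_memD(3)[OF that] True] .
      then have "\<delta> w \<inter> ?R = {}" unfolding reduction_eq by blast
      then show ?thesis by blast
    next
      case False
      \<comment> \<open>A node of \<delta> w below u would put u into \<delta> w, strictly between \<delta> u and \<delta> v.\<close>
      have "\<not> tle r p y u" if y: "y \<in> \<delta> w" for y
      proof
        assume yu: "tle r p y u"
        have "tle r p u w"
          using tle_linear_above[OF yu ornamentation_memD(3)[OF y]] False by blast
        then have "u \<in> \<delta> w" using ornamentation_interval[OF y yu] by blast
        moreover have "u \<noteq> w" using False tle_refl[of r p w] by blast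
        ultimately have "\<delta> u \<subset> \<delta> w"
          using ornamentation_mem_subset ornamentation_inj[OF u(1) assms(2)] by blast
        moreover have "\<delta> w \<subset> \<delta> v" using 3 ornamentation_inj[OF assms(2) u(2)] assms(3) by blast
        ultimately show False using assms(1,2) unfolding wraps_def by blast
      qed
      then have "\<delta> w \<subseteq> ?R" using 3 unfolding reduction_eq by blast
      then show ?thesis by blast
    qed
  qed (use sub in blast)+
qed

lemma ornamentation_delta_red:
  assumes "wraps V r p \<delta> v u"
  shows "ornamentation V r p (delta_red r p \<delta> u v)"
  unfolding delta_red_def
  using ornamentation_update reduction_ornament[OF assms] reduction_nested[OF assms]
    wrapsD(2)[OF assms] by blast

lemma exists_wraps_containing:
  assumes v: "v \<in> V" and x: "x \<in> \<delta> v" "x \<noteq> v"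
  shows "\<exists>u. wraps V r p \<delta> v u \<and> x \<in> \<delta> u"
proof -
  have xV: "x \<in> V" using ornamentation_memD(2)[OF x(1)] .
  have "\<delta> x \<noteq> \<delta> v" using ornamentation_inj[OF xV v] x(2) by blast
  then have "\<delta> x \<subset> \<delta> v" using ornamentation_mem_subset[OF x(1)] by blast
  define C where "C = {w \<in> V. \<delta> x \<subseteq> \<delta> w \<and> \<delta> w \<subset> \<delta> v}"
  have "x \<in> C" unfolding C_def using xV \<open>\<delta> x \<subset> \<delta> v\<close> by blast
  moreover have "finite (\<delta> ` C)" unfolding C_def using finite_V by simp
  ultimately obtain m where m: "m \<in> \<delta> ` C" "\<forall>b\<in>\<delta> ` C. m \<subseteq> b \<longrightarrow> m = b"
    using finite_has_maximal2[of "\<delta> ` C" "\<delta> x"] by blast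
  then obtain u where u: "u \<in> C" "m = \<delta> u" by blast
  have "wraps V r p \<delta> v u"
    unfolding wraps_def
  proof (intro conjI)
    show "u \<in> V" "v \<in> V" "\<delta> u \<subseteq> \<delta> v" "u \<noteq> v" using u(1) v unfolding C_def by auto
    show "\<not> (\<exists>w\<in>V. \<delta> u \<subset> \<delta> w \<and> \<delta> w \<subset> \<delta> v)"
    proof
      assume "\<exists>w\<in>V. \<delta> u \<subset> \<delta> w \<and> \<delta> w \<subset> \<delta> v"
      then obtain w where w: "w \<in> V" "\<delta> u \<subset> \<delta> w" "\<delta> w \<subset> \<delta> v" by blast
      then have "w \<in> C" using u(1) unfolding C_def by blast
      then have "\<delta> w \<in> \<delta> ` C" by blast
      then show False using m(2) u(2) w(2) by blast
    qed
  qed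
  moreover have "x \<in> \<delta> u" using ornamentation_top[OF xV] u(1) unfolding C_def by blast
  ultimately show ?thesis by blast
qed

lemma reduction_subset_minimal:
  assumes "wraps V r p \<delta> v u'"
  shows "\<exists>u\<in>M V r p \<delta> v. reduction r p \<delta> v u' \<subseteq> reduction r p \<delta> v u"
proof -
  define RS where "RS = {S. is_reduction V r p \<delta> v S}"
  have "RS \<subseteq> Pow (\<delta> v)" unfolding RS_def is_reduction_def reduction_def by auto
  then have "finite RS" using ornamentation_finite by (meson finite_Pow_iff finite_subset)
  moreover have "reduction r p \<delta> v u' \<in> RS" unfolding RS_def is_reduction_def using assms by blast
  ultimately obtain S where S: "S \<in> RS" "reduction r p \<delta> v u' \<subseteq> S" "\<forall>S'\<in>RS. S \<subseteq> S' \<longrightarrow> S = S'"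
    using finite_has_maximal2 by metis
  then obtain u where u: "wraps V r p \<delta> v u" "S = reduction r p \<delta> v u"
    unfolding RS_def is_reduction_def by blast
  have "minimal_reduction V r p \<delta> v S" unfolding minimal_reduction_def using S unfolding RS_def by blast
  then have "u \<in> M V r p \<delta> v" unfolding M_def using u wrapsD(4)[OF u(1)] by blast
  then show ?thesis using S(2) u(2) by blast
qed

end

section \<open>Lower covers\<close>

lemma lower_ornamentation_below_reduction:
  assumes orn: "ornamentation V r p \<delta>" and orn': "ornamentation V r p \<gamma>"
    and le: "orn_le V \<gamma> \<delta>" and v: "v \<in> V" and ne: "\<gamma> v \<noteq> \<delta> v"
    and agree: "\<forall>u. wraps V r p \<delta> v u \<longrightarrow> \<gamma> u = \<delta> u"
  shows "\<exists>u. wraps V r p \<delta> v u \<and> \<gamma> v \<subseteq> reduction r p \<delta> v u"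
proof -
  have sub: "\<gamma> v \<subseteq> \<delta> v" using le v unfolding orn_le_def by blast
  then obtain x where x: "x \<in> \<delta> v" "x \<notin> \<gamma> v" using ne by blast
  then have "x \<noteq> v" using ornamentation_top[OF orn' v] by blast
  then obtain u where u: "wraps V r p \<delta> v u" "x \<in> \<delta> u"
    using exists_wraps_containing[OF orn v x(1)] by blast
  note u' = wrapsD[OF orn u(1)]
  have same: "\<gamma> u = \<delta> u" using agree u(1) by blast
  have disjoint: "\<gamma> u \<inter> \<gamma> v = {}"
  proof -
    have "\<not> \<gamma> u \<subseteq> \<gamma> v" using x(2) u(2) same by blast
    moreover have "\<not> \<gamma> v \<subseteq> \<gamma> u"
    proof
      assume "\<gamma> v \<subseteq> \<gamma> u"
      then have "v \<in> \<delta> u" using ornamentation_top[OF orn' v] same by blast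
      then have "tle r p v u" by (rule ornamentation_memD(3)[OF orn])
      moreover have "tle r p u v" using ornamentation_memD(3)[OF orn u'(4)] .
      ultimately show False using tle_antisym u'(2,3) by blast
    qed
    ultimately show ?thesis using ornamentation_nested[OF orn' u'(1) v] by blast
  qed
  have "\<not> tle r p y u" if y: "y \<in> \<gamma> v" for y
  proof
    assume "tle r p y u"
    then have "u \<in> \<gamma> v"
      using ornamentation_interval[OF orn' y] ornamentation_memD(3)[OF orn u'(4)] by blast
    then show False using disjoint ornamentation_top[OF orn' u'(1)] by blast
  qed
  then have "\<gamma> v \<subseteq> reduction r p \<delta> v u" using sub unfolding reduction_eq by blast
  then show ?thesis using u(1) by blast
qed

lemma delta_red_covered:
  assumes orn: "ornamentation V r p \<delta>" and uM: "u \<in> M V r p \<delta> v"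
  shows "covered_by V r p (delta_red r p \<delta> u v) \<delta>"
proof -
  have wr: "wraps V r p \<delta> v u" and mr: "minimal_reduction V r p \<delta> v (reduction r p \<delta> v u)"
    using M_memD[OF uM] by auto
  note u = wrapsD[OF orn wr]
  let ?R = "reduction r p \<delta> v u"
  have "u \<notin> ?R" unfolding reduction_eq by (simp add: tle_refl)
  then have ne: "delta_red r p \<delta> u v \<noteq> \<delta>" using u(4) unfolding delta_red_def by (metis fun_upd_same)
  have le: "orn_le V (delta_red r p \<delta> u v) \<delta>"
    unfolding orn_le_def delta_red_apply reduction_eq by auto
  have "\<gamma> = delta_red r p \<delta> u v \<or> \<gamma> = \<delta>"
    if \<gamma>: "ornamentation V r p \<gamma>" "orn_le V (delta_red r p \<delta> u v) \<gamma>" "orn_le V \<gamma> \<delta>" for \<gamma>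
  proof (rule ccontr)
    assume neither: "\<not> (\<gamma> = delta_red r p \<delta> u v \<or> \<gamma> = \<delta>)"
    have agree: "\<gamma> w = \<delta> w" if "w \<in> V" "w \<noteq> v" for w
      using \<gamma>(2,3) that unfolding orn_le_def delta_red_apply by force
    then have "\<gamma> v \<noteq> \<delta> v" using ornamentation_eqI[OF orn \<gamma>(1)] neither by metis
    then obtain u' where u': "wraps V r p \<delta> v u'" "\<gamma> v \<subseteq> reduction r p \<delta> v u'"
      using lower_ornamentation_below_reduction[OF orn \<gamma>(1,3) u(2)] agree wrapsD[OF orn] by metis
    have "?R \<subseteq> \<gamma> v" using \<gamma>(2) u(2) unfolding orn_le_def delta_red_apply by force
    moreover have "?R \<noteq> \<gamma> v"
    proof
      assume "?R = \<gamma> v"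
      then have "\<forall>w\<in>V. \<gamma> w = delta_red r p \<delta> u v w" using agree unfolding delta_red_apply by auto
      then show False using ornamentation_eqI[OF ornamentation_delta_red[OF orn wr] \<gamma>(1)] neither by blast
    qed
    ultimately have "?R \<subset> reduction r p \<delta> v u'" using u'(2) by blast
    moreover have "is_reduction V r p \<delta> v (reduction r p \<delta> v u')"
      unfolding is_reduction_def using u'(1) by blast
    ultimately show False using mr unfolding minimal_reduction_def by blast
  qed
  then show ?thesis
    unfolding covered_by_def using ornamentation_delta_red[OF orn wr] orn le ne by blast
qed

lemma covered_by_delta_red:
  assumes orn: "ornamentation V r p \<delta>" and cov: "covered_by V r p \<delta>' \<delta>"
  shows "\<exists>v\<in>V. \<exists>u\<in>M V r p \<delta> v. \<delta>' = delta_red r p \<delta> u v"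
proof -
  have orn': "ornamentation V r p \<delta>'" and le: "orn_le V \<delta>' \<delta>" and ne: "\<delta>' \<noteq> \<delta>"
    using cov unfolding covered_by_def by auto
  define D where "D = {w \<in> V. \<delta>' w \<noteq> \<delta> w}"
  obtain w0 where "w0 \<in> D" using ornamentation_eqI[OF orn orn'] ne unfolding D_def by blast
  moreover have "finite (\<delta> ` D)" unfolding D_def using finite_V by simp
  ultimately obtain m where m: "m \<in> \<delta> ` D" "\<forall>b\<in>\<delta> ` D. b \<subseteq> m \<longrightarrow> m = b"
    using finite_has_minimal2[of "\<delta> ` D" "\<delta> w0"] by blast
  then obtain v where v: "v \<in> V" "\<delta>' v \<noteq> \<delta> v" "m = \<delta> v" unfolding D_def by blast
  \<comment> \<open>Choosing \<delta> v minimal among the changed sets makes \<delta>' agree with \<delta> on everything wrapped by v.\<close>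
  have "\<delta>' u = \<delta> u" if "wraps V r p \<delta> v u" for u
  proof (rule ccontr)
    assume "\<delta>' u \<noteq> \<delta> u"
    then have "\<delta> u \<in> \<delta> ` D" using wrapsD(1)[OF orn that] unfolding D_def by blast
    then show False using m(2) v(3) wrapsD(5)[OF orn that] by blast
  qed
  then obtain u' where u': "wraps V r p \<delta> v u'" "\<delta>' v \<subseteq> reduction r p \<delta> v u'"
    using lower_ornamentation_below_reduction[OF orn orn' le v(1,2)] by blast
  obtain u where u: "u \<in> M V r p \<delta> v" "reduction r p \<delta> v u' \<subseteq> reduction r p \<delta> v u"
    using reduction_subset_minimal[OF orn u'(1)] by blast
  have "orn_le V \<delta>' (delta_red r p \<delta> u v)"
    using le u'(2) u(2) unfolding orn_le_def delta_red_apply by auto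
  moreover have "orn_le V (delta_red r p \<delta> u v) \<delta>" "delta_red r p \<delta> u v \<noteq> \<delta>"
    "ornamentation V r p (delta_red r p \<delta> u v)"
    using delta_red_covered[OF orn u(1)] unfolding covered_by_def by auto
  ultimately have "\<delta>' = delta_red r p \<delta> u v" using cov unfolding covered_by_def by blast
  then show ?thesis using v(1) u(1) by blast
qed

lemma Pop_eq_Inter_minimal_reductions:
  assumes orn: "ornamentation V r p \<delta>" and v: "v \<in> V"
  shows "Pop V r p \<delta> v =
    (if M V r p \<delta> v = {} then \<delta> v else (\<Inter>u\<in>M V r p \<delta> v. delta_red r p \<delta> u v v))"
proof -
  let ?C = "{\<delta>' v | \<delta>'. covered_by V r p \<delta>' \<delta>}"
  let ?Rs = "(\<lambda>u. reduction r p \<delta> v u) ` M V r p \<delta> v"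
  \<comment> \<open>A lower cover that reduces another node leaves the set at v untouched.\<close>
  have C_sub: "?C \<subseteq> insert (\<delta> v) ?Rs"
  proof
    fix S assume "S \<in> ?C"
    then obtain \<delta>' where "S = \<delta>' v" "covered_by V r p \<delta>' \<delta>" by blast
    then obtain w u where "u \<in> M V r p \<delta> w" "S = delta_red r p \<delta> u w v"
      using covered_by_delta_red[OF orn] by blast
    then show "S \<in> insert (\<delta> v) ?Rs" unfolding delta_red_apply by (cases "w = v") auto
  qed
  have Rs_sub: "?Rs \<subseteq> ?C"
  proof
    fix S assume "S \<in> ?Rs"
    then obtain u where "u \<in> M V r p \<delta> v" "S = delta_red r p \<delta> u v v"
      unfolding delta_red_apply by auto
    then show "S \<in> ?C" using delta_red_covered[OF orn] by blast
  qed
  have "Pop V r p \<delta> v = \<delta> v \<inter> \<Inter>?C" unfolding Pop_def by simp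
  also have "\<dots> = \<delta> v \<inter> \<Inter>?Rs"
  proof
    show "\<delta> v \<inter> \<Inter>?C \<subseteq> \<delta> v \<inter> \<Inter>?Rs" using Inter_anti_mono[OF Rs_sub] by blast
    show "\<delta> v \<inter> \<Inter>?Rs \<subseteq> \<delta> v \<inter> \<Inter>?C" using C_sub by blast
  qed
  also have "\<dots> = (if M V r p \<delta> v = {} then \<delta> v else \<Inter>?Rs)"
  proof (cases "M V r p \<delta> v = {}")
    case False
    then have "\<Inter>?Rs \<subseteq> \<delta> v" unfolding reduction_def by blast
    then show ?thesis using False by (simp add: Int_absorb1)
  qed simp
  finally show ?thesis unfolding delta_red_apply by simp
qed

end

theorem lemma2p4:
  fixes V :: "'a set" and r :: 'a and p :: "'a \<Rightarrow> 'a" and \<delta> :: "'a \<Rightarrow> 'a set"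
  assumes "rooted_tree V r p" and "ornamentation V r p \<delta>"
  shows "(\<forall>v\<in>V. \<forall>u\<in>M V r p \<delta> v. covered_by V r p (delta_red r p \<delta> u v) \<delta>)
    \<and> (\<forall>\<delta>'. covered_by V r p \<delta>' \<delta> \<longrightarrow> (\<exists>v\<in>V. \<exists>u\<in>M V r p \<delta> v. \<delta>' = delta_red r p \<delta> u v))
    \<and> (\<forall>v\<in>V. Pop V r p \<delta> v =
         (if M V r p \<delta> v = {} then \<delta> v else (\<Inter>u\<in>M V r p \<delta> v. delta_red r p \<delta> u v v)))"
proof -
  interpret rtree V r p using assms(1) by (rule rtree.intro)
  show ?thesis
    using delta_red_covered[OF assms(2)] covered_by_delta_red[OF assms(2)]
      Pop_eq_Inter_minimal_reductions[OF assms(2)] by blast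
qed

end
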